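(* In a combinatorial auction with a non-decreasing payment rule where all bidders play piecewise constant strategies, for every bidder $i$ and every valuation $v_i$ there exists a cell vertex $b_i^*$ of bidder $i$'s action space such that for every bid $b_i\in\mathbb{R}_{\ge0}^r$, $$\bar u^{\mathrm{OPT}}_i(v_i,b_i^* )\ge \bar u^{\mathrm{OPT}}_i(v_i,b_i).$$
   Context: A combinatorial auction sells goods $M$ to bidders $N$. Each bidder $i$ bids $b_i\in\mathbb{R}_{\ge0}^r$ on his $r$ bundles of interest (other bundles bid $0$) and has valuation $v_i$ with $v_i(K)\ge0$ and free disposal ($K\subseteq K'\Rightarrow v_i(K)\le v_i(K')$). An allocation $x$ gives each bidder one bundle $x_i$ (bundle of interest or $\emptyset$), pairwise disjoint; $X(b)$ is the set of allocations maximizing $\sum_i b_i(x_i)$, one chosen uniformly at random. A payment rule gives $p_i(b,x)\le b_i(x_i)$; utility is $v_i(x_i)-p_i(b,x)$. The rule is non-decreasing if for every $x$, every $i$ and all $b,b'$ with $x\in X(b)\cap X(b')$, $b_{-i}=b'_{-i}$, $b_i'\ge b_i$ coordinatewise, $p_i(b',x)\ge p_i(b,x)$. Valuations $V_j$ are independent random variables; strategies $s_j$ map valuations to bids and are piecewise constant (finitely many values), so $b_{-i}=s_{-i}(V_{-i})$ has finite support. Let $\Pi$ be the set of vectors in $\mathbb{R}^r$ whose coordinates are a permutation of $(1,\dots,r)$. For $\delta>0$, $\bar u^\delta_i(v_i,b_i,\pi)=\mathbb{E}_{b_{-i}}\big[\mathbb{E}_{x\in X(b_i+\delta\pi,b_{-i})}[v_i(x_i)-p_i(b,x)]\big]$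 with $b=(b_i,b_{-i})$ (inner expectation uniform), and $\bar u^{\mathrm{OPT}}_i(v_i,b_i)=\max_{\pi\in\Pi}\lim_{\delta\to0}\bar u^\delta_i(v_i,b_i,\pi)$. A cell of bidder $i$'s action space is a connected region $S\subseteq\mathbb{R}_{\ge0}^r$ such that for every $b_{-i}$ with positive probability there exists an allocation $x$ with $x\in X(b_i,b_{-i})$ for all $b_i\in S$; cells are convex polytopes and cell vertices are their vertices. *)

theory Defs
  imports "HOL-Analysis.Analysis" "HOL-Probability.Probability"
begin

text \<open>
Bidders form a finite type 'n (the set N), goods a finite type 'g (the set M),
and the r bundles of interest of each bidder are indexed by a finite type 'r,
so bids are vectors in real^'r (i.e. R^r).  The bundle of interest k of bidder i
is  bnd i k.  An allocation assigns to each bidder either one of his bundles of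
interest (Some k) or the empty bundle (None).
\<close>

type_synonym ('n, 'r) alloc = "'n \<Rightarrow> 'r option"
type_synonym ('n, 'r) profile = "'n \<Rightarrow> real^'r"

definition nonneg_bids :: "(real^'r::finite) set" where
  "nonneg_bids = {b. \<forall>k. 0 \<le> b $ k}"

definition alloc_bundle :: "('n \<Rightarrow> 'r \<Rightarrow> 'g set) \<Rightarrow> ('n, 'r) alloc \<Rightarrow> 'n \<Rightarrow> 'g set" where
  "alloc_bundle bnd x i = (case x i of None \<Rightarrow> {} | Some k \<Rightarrow> bnd i k)"

definition feasible :: "('n \<Rightarrow> 'r \<Rightarrow> 'g set) \<Rightarrow> ('n, 'r) alloc \<Rightarrow> bool" where
  "feasible bnd x \<longleftrightarrow> (\<forall>i j. i \<noteq> j \<longrightarrow> alloc_bundle bnd x i \<inter> alloc_bundle bnd x j = {})"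

definition bidval :: "('n, 'r::finite) profile \<Rightarrow> 'n \<Rightarrow> ('n, 'r) alloc \<Rightarrow> real" where
  "bidval b i x = (case x i of None \<Rightarrow> 0 | Some k \<Rightarrow> b i $ k)"

definition welfare :: "('n::finite, 'r::finite) profile \<Rightarrow> ('n, 'r) alloc \<Rightarrow> real" where
  "welfare b x = (\<Sum>i\<in>UNIV. bidval b i x)"

definition Xopt :: "('n::finite \<Rightarrow> 'r::finite \<Rightarrow> 'g set) \<Rightarrow> ('n, 'r) profile \<Rightarrow> ('n, 'r) alloc set" where
  "Xopt bnd b = {x. feasible bnd x \<and> (\<forall>y. feasible bnd y \<longrightarrow> welfare b y \<le> welfare b x)}"

definition valid_payment ::
  "('n::finite \<Rightarrow> 'r::finite \<Rightarrow> 'g set) \<Rightarrow> ('n \<Rightarrow> ('n, 'r) profile \<Rightarrow> ('n, 'r) alloc \<Rightarrow> real) \<Rightarrow> bool" where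
  "valid_payment bnd p \<longleftrightarrow>
     (\<forall>b x i. (\<forall>j. b j \<in> nonneg_bids) \<longrightarrow> x \<in> Xopt bnd b \<longrightarrow> p i b x \<le> bidval b i x)"

definition nondecreasing_payment ::
  "('n::finite \<Rightarrow> 'r::finite \<Rightarrow> 'g set) \<Rightarrow> ('n \<Rightarrow> ('n, 'r) profile \<Rightarrow> ('n, 'r) alloc \<Rightarrow> real) \<Rightarrow> bool" where
  "nondecreasing_payment bnd p \<longleftrightarrow>
     (\<forall>x i b b'. (\<forall>j. b j \<in> nonneg_bids) \<longrightarrow> (\<forall>j. b' j \<in> nonneg_bids) \<longrightarrow>
        x \<in> Xopt bnd b \<longrightarrow> x \<in> Xopt bnd b' \<longrightarrow>
        (\<forall>j. j \<noteq> i \<longrightarrow> b' j = b j) \<longrightarrow> (\<forall>k. b i $ k \<le> b' i $ k) \<longrightarrow>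
        p i b x \<le> p i b' x)"

definition valuation :: "('g set \<Rightarrow> real) \<Rightarrow> bool" where
  "valuation v \<longleftrightarrow> (\<forall>K. 0 \<le> v K) \<and> (\<forall>K K'. K \<subseteq> K' \<longrightarrow> v K \<le> v K')"

text \<open>
D j is the distribution of bidder j's bid s_j(V_j) (finite support, since s_j is piecewise
constant); by independence of the V_j the opponents' profile b_{-i} is distributed as the
product of the D j, j \<noteq> i (entry i of that profile is a dummy default value 0).
\<close>
definition others_dist :: "('n::finite \<Rightarrow> (real^'r::finite) pmf) \<Rightarrow> 'n \<Rightarrow> ('n, 'r) profile pmf" where
  "others_dist D i = Pi_pmf (UNIV - {i}) 0 D"

definition perm_vectors :: "(real^'r::finite) set" where
  "perm_vectors = {\<pi>. \<exists>\<sigma>. bij_betw \<sigma> (UNIV :: 'r set) {1..CARD('r)} \<and> (\<forall>k. \<pi> $ k = real (\<sigma> k))}"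

definition unif_avg :: "'a set \<Rightarrow> ('a \<Rightarrow> real) \<Rightarrow> real" where
  "unif_avg A f = (\<Sum>a\<in>A. f a) / real (card A)"

definition ubar_delta ::
  "('n::finite \<Rightarrow> 'r::finite \<Rightarrow> 'g set) \<Rightarrow> ('n \<Rightarrow> ('n, 'r) profile \<Rightarrow> ('n, 'r) alloc \<Rightarrow> real) \<Rightarrow>
   ('n \<Rightarrow> (real^'r) pmf) \<Rightarrow> 'n \<Rightarrow> ('g set \<Rightarrow> real) \<Rightarrow> real^'r \<Rightarrow> real^'r \<Rightarrow> real \<Rightarrow> real" where
  "ubar_delta bnd p D i v bi \<pi> \<delta> =
     measure_pmf.expectation (others_dist D i)
       (\<lambda>bmi. unif_avg (Xopt bnd (bmi(i := bi + \<delta> *\<^sub>R \<pi>)))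
                 (\<lambda>x. v (alloc_bundle bnd x i) - p i (bmi(i := bi)) x))"

definition ubar_opt ::
  "('n::finite \<Rightarrow> 'r::finite \<Rightarrow> 'g set) \<Rightarrow> ('n \<Rightarrow> ('n, 'r) profile \<Rightarrow> ('n, 'r) alloc \<Rightarrow> real) \<Rightarrow>
   ('n \<Rightarrow> (real^'r) pmf) \<Rightarrow> 'n \<Rightarrow> ('g set \<Rightarrow> real) \<Rightarrow> real^'r \<Rightarrow> real" where
  "ubar_opt bnd p D i v bi =
     Max ((\<lambda>\<pi>. Lim (at_right 0) (\<lambda>\<delta>. ubar_delta bnd p D i v bi \<pi> \<delta>)) ` perm_vectors)"

definition cell_property ::
  "('n::finite \<Rightarrow> 'r::finite \<Rightarrow> 'g set) \<Rightarrow> ('n \<Rightarrow> (real^'r) pmf) \<Rightarrow> 'n \<Rightarrow> (real^'r) set \<Rightarrow> bool" where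
  "cell_property bnd D i S \<longleftrightarrow>
     S \<subseteq> nonneg_bids \<and> connected S \<and>
     (\<forall>bmi \<in> set_pmf (others_dist D i). \<exists>x. \<forall>bi\<in>S. x \<in> Xopt bnd (bmi(i := bi)))"

definition is_cell ::
  "('n::finite \<Rightarrow> 'r::finite \<Rightarrow> 'g set) \<Rightarrow> ('n \<Rightarrow> (real^'r) pmf) \<Rightarrow> 'n \<Rightarrow> (real^'r) set \<Rightarrow> bool" where
  "is_cell bnd D i S \<longleftrightarrow> S \<noteq> {} \<and> cell_property bnd D i S \<and>
     (\<forall>T. S \<subseteq> T \<longrightarrow> cell_property bnd D i T \<longrightarrow> T = S)"

definition cell_vertex ::
  "('n::finite \<Rightarrow> 'r::finite \<Rightarrow> 'g set) \<Rightarrow> ('n \<Rightarrow> (real^'r) pmf) \<Rightarrow> 'n \<Rightarrow> real^'r \<Rightarrow> bool" where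
  "cell_vertex bnd D i b \<longleftrightarrow> (\<exists>S. is_cell bnd D i S \<and> b extreme_point_of S)"

end

theory Submission
  imports Defs
begin

(*
  For a fixed opponent profile, perturbing bidder i's bid by \<delta>\<pi> with \<delta> \<rightarrow> 0 only breaks
  ties among the welfare-maximising allocations in favour of a larger \<pi>-bid, so the
  optimistic utility at a bid is the maximum over \<pi> of the expected utility under this
  tie-breaking.  Given a bid b and an optimal \<pi>, lower b as far as possible while keeping
  all tie-broken allocations optimal: these bids form a closed set that is closed under
  componentwise minima, hence they have a least element b*, and b* is a vertex of its
  cell.  Ordering the bundles lexicographically by (b - b*, \<pi>) yields a tie-breaking
  vector that selects at b* exactly the allocations selected at b, and payments at b*
  are not larger since the payment rule is non-decreasing.  So every bid is dominated
  by a cell vertex, and there are only finitely many cell vertices.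
*)

section \<open>Maximizers under a vanishing perturbation\<close>

definition maximizers :: "'a set \<Rightarrow> ('a \<Rightarrow> real) \<Rightarrow> 'a set" where
  "maximizers F f = {x \<in> F. \<forall>y\<in>F. f y \<le> f x}"

lemma maximizers_subset: "maximizers F f \<subseteq> F"
  by (auto simp: maximizers_def)

lemma maximizers_nonempty:
  assumes "finite F" "F \<noteq> {}"
  shows "maximizers F f \<noteq> {}"
proof -
  have "Max (f ` F) \<in> f ` F"
    using assms by simp
  then obtain x where "x \<in> F" "f x = Max (f ` F)"
    by auto
  then have "x \<in> maximizers F f"
    using assms by (auto simp: maximizers_def)
  then show ?thesis by blast
qed

lemma eventually_strict_ineq_perturbed:
  fixes a b c d :: real
  assumes "a < b"
  shows "eventually (\<lambda>\<delta>. a + \<delta> * c < b + \<delta> * d) (at_right 0)"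
proof -
  have "((\<lambda>\<delta>::real. \<delta> * (c - d)) \<longlongrightarrow> 0 * (c - d)) (at_right 0)"
    by (intro tendsto_intros)
  then have "eventually (\<lambda>\<delta>. \<delta> * (c - d) < b - a) (at_right 0)"
    using assms by (intro order_tendstoD(2)) auto
  then show ?thesis
    by eventually_elim (auto simp: algebra_simps)
qed

lemma eventually_maximizers_perturbed:
  fixes f g :: "'a \<Rightarrow> real"
  assumes "finite F"
  shows "eventually (\<lambda>\<delta>. maximizers F (\<lambda>x. f x + \<delta> * g x) = maximizers (maximizers F f) g)
           (at_right 0)"
proof -
  have "eventually (\<lambda>\<delta>. 0 < \<delta> \<and>
      (\<forall>x\<in>F. \<forall>y\<in>F. f y < f x \<longrightarrow> f y + \<delta> * g y < f x + \<delta> * g x)) (at_right 0)"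
    using assms eventually_strict_ineq_perturbed
    by (intro eventually_conj eventually_at_right_less eventually_ball_finite ballI)
      (auto intro: eventually_mono)
  then show ?thesis
  proof eventually_elim
    case (elim \<delta>)
    then have pos: "0 < \<delta>"
      and strict: "\<And>x y. x \<in> F \<Longrightarrow> y \<in> F \<Longrightarrow> f y < f x \<Longrightarrow> f y + \<delta> * g y < f x + \<delta> * g x"
      by auto
    show ?case
    proof (intro set_eqI iffI)
      fix x assume x: "x \<in> maximizers F (\<lambda>x. f x + \<delta> * g x)"
      then have fmax: "x \<in> maximizers F f"
        using strict by (force simp: maximizers_def not_le)
      have "g y \<le> g x" if "y \<in> maximizers F f" for y
        using x fmax that pos by (force simp: maximizers_def)
      then show "x \<in> maximizers (maximizers F f) g"
        using fmax by (simp add: maximizers_def)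
    next
      fix x assume x: "x \<in> maximizers (maximizers F f) g"
      have "f y + \<delta> * g y \<le> f x + \<delta> * g x" if y: "y \<in> F" for y
      proof (cases "f y < f x")
        case True
        then show ?thesis using strict y x by (force simp: maximizers_def)
      next
        case False
        then have "y \<in> maximizers F f" "f y = f x"
          using x y by (force simp: maximizers_def)+
        then show ?thesis using x pos by (simp add: maximizers_def)
      qed
      then show "x \<in> maximizers F (\<lambda>x. f x + \<delta> * g x)"
        using x by (simp add: maximizers_def)
    qed
  qed
qed

section \<open>Bids on bundles and permutation vectors\<close>

definition bid_on :: "real^'r::finite \<Rightarrow> 'r option \<Rightarrow> real" where
  "bid_on b ob = (case ob of None \<Rightarrow> 0 | Some k \<Rightarrow> b $ k)"

lemma bid_on_add: "bid_on (a + c) ob = bid_on a ob + bid_on c ob"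
  by (cases ob) (auto simp: bid_on_def)

lemma bid_on_scaleR: "bid_on (t *\<^sub>R a) ob = t * bid_on a ob"
  by (cases ob) (auto simp: bid_on_def)

lemma bid_on_diff: "bid_on (a - c) ob = bid_on a ob - bid_on c ob"
  by (cases ob) (auto simp: bid_on_def)

lemma bid_on_mono: "(\<And>k. a $ k \<le> c $ k) \<Longrightarrow> bid_on a ob \<le> bid_on c ob"
  by (cases ob) (auto simp: bid_on_def)

definition bundle_indicator :: "'r::finite option \<Rightarrow> real^'r" where
  "bundle_indicator ob = (case ob of None \<Rightarrow> 0 | Some k \<Rightarrow> axis k 1)"

lemma bid_on_eq_inner: "bid_on b ob = bundle_indicator ob \<bullet> b"
  by (cases ob) (auto simp: bid_on_def bundle_indicator_def inner_axis')

lemma perm_vectors_finite: "finite (perm_vectors :: (real^'r::finite) set)"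
proof -
  have "perm_vectors \<subseteq> vec_lambda ` (PiE (UNIV :: 'r set) (\<lambda>_. real ` {1..CARD('r)}))"
  proof
    fix \<pi> :: "real^'r" assume "\<pi> \<in> perm_vectors"
    then have "vec_nth \<pi> \<in> PiE UNIV (\<lambda>_. real ` {1..CARD('r)})"
      by (auto simp: perm_vectors_def PiE_UNIV_domain dest!: bij_betw_apply)
    then show "\<pi> \<in> vec_lambda ` (PiE UNIV (\<lambda>_. real ` {1..CARD('r)}))"
      by (metis image_eqI vec_nth_inverse)
  qed
  then show ?thesis
    by (rule finite_subset) (intro finite_imageI finite_PiE; simp)
qed

lemma perm_vectors_nonempty: "(perm_vectors :: (real^'r::finite) set) \<noteq> {}"
proof -
  obtain \<sigma> where "bij_betw \<sigma> (UNIV :: 'r set) {1..CARD('r)}"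
    using finite_same_card_bij[of "UNIV :: 'r set" "{1..CARD('r)}"] by auto
  then have "(\<chi> k. real (\<sigma> k)) \<in> (perm_vectors :: (real^'r) set)"
    by (auto simp: perm_vectors_def)
  then show ?thesis by blast
qed

lemma perm_vector_ge_1: "\<pi> \<in> perm_vectors \<Longrightarrow> 1 \<le> \<pi> $ k"
  by (auto simp: perm_vectors_def dest!: bij_betw_apply[where a = k])

lemma perm_vector_inj: "\<pi> \<in> perm_vectors \<Longrightarrow> \<pi> $ k = \<pi> $ l \<Longrightarrow> k = l"
  by (auto simp: perm_vectors_def bij_betw_def inj_on_def)

lemma bid_on_perm_vector_inj:
  assumes "\<pi> \<in> perm_vectors" "bid_on \<pi> ob = bid_on \<pi> ob'"
  shows "ob = ob'"
proof -
  have "\<pi> $ k \<noteq> 0" for k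
    using perm_vector_ge_1[OF assms(1), of k] by simp
  then show ?thesis
    using assms(2) perm_vector_inj[OF assms(1)] by (cases ob; cases ob') (auto simp: bid_on_def)
qed

text \<open>The rank of an element in the order, shifted to start at 1, is the permutation.\<close>

lemma ex_perm_vector_strict_mono:
  fixes lt :: "'r::finite \<Rightarrow> 'r \<Rightarrow> bool"
  assumes trans: "\<And>a b c. lt a b \<Longrightarrow> lt b c \<Longrightarrow> lt a c" and irrefl: "\<And>a. \<not> lt a a"
    and total: "\<And>k l. k \<noteq> l \<Longrightarrow> lt k l \<or> lt l k"
  shows "\<exists>\<pi>\<in>perm_vectors. \<forall>k l. lt l k \<longrightarrow> \<pi> $ l < \<pi> $ k"
proof -
  define \<sigma> where "\<sigma> k = Suc (card {m. lt m k})" for k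
  have mono: "\<sigma> l < \<sigma> k" if "lt l k" for k l
  proof -
    have "{m. lt m l} \<subset> {m. lt m k}"
      using that trans irrefl by blast
    then show ?thesis
      unfolding \<sigma>_def by (simp add: psubset_card_mono)
  qed
  have inj: "inj \<sigma>"
    by (metis injI total mono less_irrefl)
  have range: "\<sigma> k \<in> {1..CARD('r)}" for k
  proof -
    have "{m. lt m k} \<subset> UNIV"
      using irrefl by blast
    then have "card {m. lt m k} < CARD('r)"
      by (simp add: psubset_card_mono)
    then show ?thesis
      by (simp add: \<sigma>_def)
  qed
  have "\<sigma> ` UNIV = {1..CARD('r)}"
    using inj range by (intro card_subset_eq) (auto simp: card_image)
  then have "bij_betw \<sigma> (UNIV :: 'r set) {1..CARD('r)}"
    using inj by (simp add: bij_betw_def)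
  then have "(\<chi> k. real (\<sigma> k)) \<in> (perm_vectors :: (real^'r) set)"
    by (auto simp: perm_vectors_def)
  then show ?thesis
    using mono by force
qed

definition refines_lex :: "real^'r::finite \<Rightarrow> real^'r \<Rightarrow> real^'r \<Rightarrow> bool" where
  "refines_lex d \<pi>0 \<pi>1 \<longleftrightarrow> (\<forall>ob ob'.
     bid_on d ob < bid_on d ob' \<or> (bid_on d ob = bid_on d ob' \<and> bid_on \<pi>0 ob < bid_on \<pi>0 ob') \<longrightarrow>
     bid_on \<pi>1 ob < bid_on \<pi>1 ob')"

lemma ex_perm_vector_refines_lex:
  fixes d \<pi>0 :: "real^'r::finite"
  assumes "\<pi>0 \<in> perm_vectors" and "\<forall>k. 0 \<le> d $ k"
  shows "\<exists>\<pi>1\<in>perm_vectors. refines_lex d \<pi>0 \<pi>1"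
proof -
  define lt where "lt l k \<longleftrightarrow> d $ l < d $ k \<or> (d $ l = d $ k \<and> \<pi>0 $ l < \<pi>0 $ k)" for l k
  have "\<exists>\<pi>1\<in>perm_vectors. \<forall>k l. lt l k \<longrightarrow> \<pi>1 $ l < \<pi>1 $ k"
  proof (rule ex_perm_vector_strict_mono)
    show "lt k l \<or> lt l k" if "k \<noteq> l" for k l
    proof -
      have "\<pi>0 $ k \<noteq> \<pi>0 $ l"
        using that perm_vector_inj[OF assms(1)] by blast
      then show ?thesis
        unfolding lt_def by linarith
    qed
  qed (auto simp: lt_def)
  then obtain \<pi>1 where "\<pi>1 \<in> perm_vectors"
    and lex: "\<And>k l. d $ l < d $ k \<or> (d $ l = d $ k \<and> \<pi>0 $ l < \<pi>0 $ k) \<Longrightarrow> \<pi>1 $ l < \<pi>1 $ k"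
    unfolding lt_def by blast
  moreover have "bid_on \<pi>1 ob < bid_on \<pi>1 ob'"
    if hyp: "bid_on d ob < bid_on d ob' \<or> (bid_on d ob = bid_on d ob' \<and> bid_on \<pi>0 ob < bid_on \<pi>0 ob')"
    for ob ob'
  proof (cases ob)
    case None
    then obtain k where "ob' = Some k"
      using hyp by (cases ob') (auto simp: bid_on_def)
    then show ?thesis
      using None perm_vector_ge_1[OF \<open>\<pi>1 \<in> perm_vectors\<close>, of k] by (simp add: bid_on_def)
  next
    case (Some l)
    then obtain k where "ob' = Some k"
      using hyp assms(2)[rule_format, of l] perm_vector_ge_1[OF assms(1), of l]
      by (cases ob') (auto simp: bid_on_def)
    then show ?thesis
      using Some hyp lex by (simp add: bid_on_def)
  qed
  ultimately show ?thesis
    unfolding refines_lex_def by blast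
qed

section \<open>Optimal allocations as functions of one bid\<close>

definition others_welfare :: "('n::finite, 'r::finite) profile \<Rightarrow> 'n \<Rightarrow> ('n, 'r) alloc \<Rightarrow> real" where
  "others_welfare b i x = (\<Sum>j\<in>UNIV - {i}. bidval b j x)"

lemma welfare_fun_upd: "welfare (b(i := c)) x = bid_on c (x i) + others_welfare b i x"
proof -
  have "welfare (b(i := c)) x = bidval (b(i := c)) i x + (\<Sum>j\<in>UNIV - {i}. bidval (b(i := c)) j x)"
    unfolding welfare_def by (simp add: sum.remove[of UNIV i])
  also have "bidval (b(i := c)) i x = bid_on c (x i)"
    by (simp add: bidval_def bid_on_def split: option.split)
  also have "(\<Sum>j\<in>UNIV - {i}. bidval (b(i := c)) j x) = others_welfare b i x"
    unfolding others_welfare_def by (intro sum.cong) (auto simp: bidval_def split: option.split)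
  finally show ?thesis .
qed

lemma welfare_fun_upd_diff: "welfare (b(i := c)) x - welfare (b(i := c')) x = bid_on (c - c') (x i)"
  by (simp add: welfare_fun_upd bid_on_diff)

lemma Xopt_eq_maximizers: "Xopt bnd b = maximizers {x. feasible bnd x} (welfare b)"
  by (auto simp: Xopt_def maximizers_def)

lemma Xopt_nonempty:
  fixes bnd :: "'n::finite \<Rightarrow> 'r::finite \<Rightarrow> 'g set"
  shows "Xopt bnd b \<noteq> {}"
proof -
  have "feasible bnd (\<lambda>_. None)"
    by (simp add: feasible_def alloc_bundle_def)
  then show ?thesis
    unfolding Xopt_eq_maximizers by (intro maximizers_nonempty) auto
qed

lemma Xopt_welfare_eq: "x \<in> Xopt bnd b \<Longrightarrow> y \<in> Xopt bnd b \<Longrightarrow> welfare b y = welfare b x"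
  by (auto simp: Xopt_def intro: antisym)

lemma Xopt_if_welfare_eq:
  "x \<in> Xopt bnd b \<Longrightarrow> feasible bnd y \<Longrightarrow> welfare b y = welfare b x \<Longrightarrow> y \<in> Xopt bnd b"
  by (simp add: Xopt_def)

lemma polyhedron_Xopt_fun_upd:
  fixes bnd :: "'n::finite \<Rightarrow> 'r::finite \<Rightarrow> 'g set"
  shows "polyhedron {c. x \<in> Xopt bnd (b(i := c))}"
proof (cases "feasible bnd x")
  case True
  have "{c. x \<in> Xopt bnd (b(i := c))} =
      (\<Inter>y\<in>{y. feasible bnd y}.
        {c. (bundle_indicator (y i) - bundle_indicator (x i)) \<bullet> c \<le> others_welfare b i x - others_welfare b i y})"
    using True
    by (auto simp: Xopt_def welfare_fun_upd bid_on_eq_inner inner_diff_left algebra_simps)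
  also have "polyhedron \<dots>"
    by (intro polyhedron_Inter finite_imageI) (auto intro: polyhedron_halfspace_le)
  finally show ?thesis .
next
  case False
  then show ?thesis by (simp add: Xopt_def)
qed

lemma polyhedron_nonneg_bids: "polyhedron (nonneg_bids :: (real^'r::finite) set)"
proof -
  have "nonneg_bids = (\<Inter>k\<in>UNIV. {b. (- axis k 1) \<bullet> b \<le> (0::real)})"
    by (auto simp: nonneg_bids_def inner_axis')
  also have "polyhedron \<dots>"
    by (intro polyhedron_Inter finite_imageI) (auto intro: polyhedron_halfspace_le polyhedron_halfspace_ge)
  finally show ?thesis .
qed

lemma Xopt_fun_upd_min:
  fixes a c :: "real^'r::finite"
  assumes "x \<in> Xopt bnd (b(i := a))" "x \<in> Xopt bnd (b(i := c))"
  shows "x \<in> Xopt bnd (b(i := \<chi> k. min (a $ k) (c $ k)))"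
proof -
  let ?m = "\<chi> k. min (a $ k) (c $ k)"
  have at_x: "bid_on ?m (x i) = bid_on a (x i) \<or> bid_on ?m (x i) = bid_on c (x i)"
    by (cases "x i") (auto simp: bid_on_def min_def)
  have below: "bid_on ?m ob \<le> bid_on a ob" "bid_on ?m ob \<le> bid_on c ob" for ob
    by (auto intro: bid_on_mono)
  have "welfare (b(i := ?m)) z \<le> welfare (b(i := ?m)) x" if "feasible bnd z" for z
  proof -
    have "welfare (b(i := a)) z \<le> welfare (b(i := a)) x" "welfare (b(i := c)) z \<le> welfare (b(i := c)) x"
      using assms that by (simp_all add: Xopt_def)
    then show ?thesis
      using at_x below[of "z i"] unfolding welfare_fun_upd by linarith
  qed
  then show ?thesis
    using assms(1) by (simp add: Xopt_def)
qed

text \<open>The welfare difference of two allocations is affine in bidder i's bid; it is \<open>\<le> 0\<close>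
  at both ends of the segment and \<open>= 0\<close> at an interior point, so it vanishes at the ends.\<close>

lemma Xopt_fun_upd_open_segment:
  assumes "x \<in> Xopt bnd (b(i := a))" "x \<in> Xopt bnd (b(i := c))" "x \<in> Xopt bnd (b(i := e))"
    and "y \<in> Xopt bnd (b(i := e))" and "e \<in> open_segment a c"
  shows "y \<in> Xopt bnd (b(i := a))"
proof -
  obtain u where u: "0 < u" "u < 1" and e: "e = (1 - u) *\<^sub>R a + u *\<^sub>R c"
    using assms(5) by (auto simp: in_segment)
  define h where "h c' = welfare (b(i := c')) y - welfare (b(i := c')) x" for c'
  have "feasible bnd y"
    using assms(4) by (simp add: Xopt_def)
  then have "h a \<le> 0" "h c \<le> 0"
    using assms(1,2) by (auto simp: Xopt_def h_def)
  then have "(1 - u) * h a \<le> 0" "u * h c \<le> 0"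
    using u by (simp_all add: mult_nonneg_nonpos)
  moreover have "h e = 0"
    using Xopt_welfare_eq[OF assms(3,4)] by (simp add: h_def)
  moreover have "h e = (1 - u) * h a + u * h c"
    by (simp only: h_def e welfare_fun_upd bid_on_add bid_on_scaleR) (simp add: algebra_simps)
  ultimately have "(1 - u) * h a = 0"
    by linarith
  then have "welfare (b(i := a)) y = welfare (b(i := a)) x"
    using u by (simp add: h_def)
  then show ?thesis
    by (rule Xopt_if_welfare_eq[OF assms(1) \<open>feasible bnd y\<close>])
qed

section \<open>Tie-breaking by perturbation\<close>

definition Xopt_tiebreak ::
  "('n::finite \<Rightarrow> 'r::finite \<Rightarrow> 'g set) \<Rightarrow> ('n, 'r) profile \<Rightarrow> 'n \<Rightarrow> real^'r \<Rightarrow> ('n, 'r) alloc set" where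
  "Xopt_tiebreak bnd b i \<pi> = maximizers (Xopt bnd b) (\<lambda>x. bid_on \<pi> (x i))"

lemma Xopt_tiebreak_subset: "Xopt_tiebreak bnd b i \<pi> \<subseteq> Xopt bnd b"
  by (simp add: Xopt_tiebreak_def maximizers_subset)

lemma Xopt_tiebreak_nonempty:
  fixes bnd :: "'n::finite \<Rightarrow> 'r::finite \<Rightarrow> 'g set"
  shows "Xopt_tiebreak bnd b i \<pi> \<noteq> {}"
  unfolding Xopt_tiebreak_def using Xopt_nonempty by (intro maximizers_nonempty) auto

lemma eventually_Xopt_perturbed:
  fixes bnd :: "'n::finite \<Rightarrow> 'r::finite \<Rightarrow> 'g set"
  shows "eventually (\<lambda>\<delta>. Xopt bnd (b(i := c + \<delta> *\<^sub>R \<pi>)) = Xopt_tiebreak bnd (b(i := c)) i \<pi>)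
           (at_right 0)"
proof -
  have "welfare (b(i := c + \<delta> *\<^sub>R \<pi>)) = (\<lambda>x. welfare (b(i := c)) x + \<delta> * bid_on \<pi> (x i))" for \<delta>
    by (simp add: fun_eq_iff welfare_fun_upd bid_on_add bid_on_scaleR)
  then show ?thesis
    unfolding Xopt_tiebreak_def Xopt_eq_maximizers by (simp add: eventually_maximizers_perturbed)
qed

lemma Xopt_tiebreak_lower_bid_dominates:
  fixes bnd :: "'n::finite \<Rightarrow> 'r::finite \<Rightarrow> 'g set"
  assumes x: "x \<in> Xopt_tiebreak bnd (b(i := bi)) i \<pi>0" "x \<in> Xopt bnd (b(i := bs))"
    and y: "y \<in> Xopt bnd (b(i := bs))" and "\<pi>0 \<in> perm_vectors"
    and lex: "refines_lex (bi - bs) \<pi>0 \<pi>1"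
  shows "bid_on \<pi>1 (y i) < bid_on \<pi>1 (x i) \<or> y i = x i"
proof -
  have xi: "x \<in> Xopt bnd (b(i := bi))" and
    xmax: "\<And>z. z \<in> Xopt bnd (b(i := bi)) \<Longrightarrow> bid_on \<pi>0 (z i) \<le> bid_on \<pi>0 (x i)"
    using x(1) by (auto simp: Xopt_tiebreak_def maximizers_def)
  have "feasible bnd y"
    using y by (simp add: Xopt_def)
  then have le_bi: "welfare (b(i := bi)) y \<le> welfare (b(i := bi)) x"
    using xi by (simp add: Xopt_def)
  have eq_bs: "welfare (b(i := bs)) y = welfare (b(i := bs)) x"
    using Xopt_welfare_eq[OF x(2) y] .
  have "bid_on (bi - bs) (y i) \<le> bid_on (bi - bs) (x i)"
    using le_bi eq_bs welfare_fun_upd_diff[of b i bi y bs] welfare_fun_upd_diff[of b i bi x bs]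
    by linarith
  moreover have "bid_on \<pi>0 (y i) < bid_on \<pi>0 (x i)"
    if "bid_on (bi - bs) (y i) = bid_on (bi - bs) (x i)" "y i \<noteq> x i"
  proof -
    have "welfare (b(i := bi)) y = welfare (b(i := bi)) x"
      using that(1) eq_bs welfare_fun_upd_diff[of b i bi y bs] welfare_fun_upd_diff[of b i bi x bs]
      by linarith
    then have "y \<in> Xopt bnd (b(i := bi))"
      by (rule Xopt_if_welfare_eq[OF xi \<open>feasible bnd y\<close>])
    then show ?thesis
      using xmax bid_on_perm_vector_inj[OF \<open>\<pi>0 \<in> perm_vectors\<close>] that(2)
      by (metis order_le_imp_less_or_eq)
  qed
  ultimately have "y i \<noteq> x i \<Longrightarrow> bid_on (bi - bs) (y i) < bid_on (bi - bs) (x i) \<or>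
      (bid_on (bi - bs) (y i) = bid_on (bi - bs) (x i) \<and> bid_on \<pi>0 (y i) < bid_on \<pi>0 (x i))"
    by fastforce
  then show ?thesis
    using lex unfolding refines_lex_def by blast
qed

lemma Xopt_tiebreak_lower_bid:
  fixes bnd :: "'n::finite \<Rightarrow> 'r::finite \<Rightarrow> 'g set"
  assumes keep: "Xopt_tiebreak bnd (b(i := bi)) i \<pi>0 \<subseteq> Xopt bnd (b(i := bs))"
    and "\<pi>0 \<in> perm_vectors"
    and lex: "refines_lex (bi - bs) \<pi>0 \<pi>1"
  shows "Xopt_tiebreak bnd (b(i := bs)) i \<pi>1 = Xopt_tiebreak bnd (b(i := bi)) i \<pi>0"
proof (intro set_eqI iffI)
  fix z assume z: "z \<in> Xopt_tiebreak bnd (b(i := bs)) i \<pi>1"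
  obtain x where x: "x \<in> Xopt_tiebreak bnd (b(i := bi)) i \<pi>0"
    using Xopt_tiebreak_nonempty by blast
  have xs: "x \<in> Xopt bnd (b(i := bs))"
    using x keep by blast
  have zs: "z \<in> Xopt bnd (b(i := bs))" and "bid_on \<pi>1 (x i) \<le> bid_on \<pi>1 (z i)"
    using z xs by (auto simp: Xopt_tiebreak_def maximizers_def)
  then have zx: "z i = x i"
    using Xopt_tiebreak_lower_bid_dominates[OF x xs _ \<open>\<pi>0 \<in> perm_vectors\<close> lex] by fastforce
  have xi: "x \<in> Xopt bnd (b(i := bi))"
    using x Xopt_tiebreak_subset by blast
  have "welfare (b(i := bi)) z = welfare (b(i := bi)) x"
    using Xopt_welfare_eq[OF xs zs] welfare_fun_upd_diff[of b i bi z bs] welfare_fun_upd_diff[of b i bi x bs] zx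
    by simp
  then have "z \<in> Xopt bnd (b(i := bi))"
    using zs by (intro Xopt_if_welfare_eq[OF xi]) (auto simp: Xopt_def)
  then show "z \<in> Xopt_tiebreak bnd (b(i := bi)) i \<pi>0"
    using x zx by (auto simp: Xopt_tiebreak_def maximizers_def)
next
  fix x assume x: "x \<in> Xopt_tiebreak bnd (b(i := bi)) i \<pi>0"
  have xs: "x \<in> Xopt bnd (b(i := bs))"
    using x keep by blast
  show "x \<in> Xopt_tiebreak bnd (b(i := bs)) i \<pi>1"
    using Xopt_tiebreak_lower_bid_dominates[OF x xs _ \<open>\<pi>0 \<in> perm_vectors\<close> lex] xs
    by (force simp: Xopt_tiebreak_def maximizers_def)
qed

lemma finite_set_pmf_others_dist:
  assumes "\<And>j. finite (set_pmf (D j))"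
  shows "finite (set_pmf (others_dist D i))"
proof -
  have "set_pmf (others_dist D i) \<subseteq> PiE_dflt (UNIV - {i}) 0 (set_pmf \<circ> D)"
    unfolding others_dist_def by (rule set_Pi_pmf_subset') simp
  moreover have "finite (PiE_dflt (UNIV - {i}) 0 (set_pmf \<circ> D))"
    using assms by (intro finite_PiE_dflt) auto
  ultimately show ?thesis
    by (rule finite_subset)
qed

lemma set_pmf_others_dist:
  assumes "bmi \<in> set_pmf (others_dist D i)" "j \<noteq> i"
  shows "bmi j \<in> set_pmf (D j)"
proof -
  have "set_pmf (others_dist D i) \<subseteq> PiE_dflt (UNIV - {i}) 0 (set_pmf \<circ> D)"
    unfolding others_dist_def by (rule set_Pi_pmf_subset') simp
  then show ?thesis
    using assms by (auto simp: PiE_dflt_def)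
qed

lemma expectation_mono_finite_pmf:
  fixes f g :: "'a \<Rightarrow> real"
  assumes "finite (set_pmf M)" "\<And>x. x \<in> set_pmf M \<Longrightarrow> f x \<le> g x"
  shows "measure_pmf.expectation M f \<le> measure_pmf.expectation M g"
  using assms
  by (intro integral_mono_AE) (auto simp: AE_measure_pmf_iff intro: integrable_measure_pmf_finite)

definition ubar_tiebreak ::
  "('n::finite \<Rightarrow> 'r::finite \<Rightarrow> 'g set) \<Rightarrow> ('n \<Rightarrow> ('n, 'r) profile \<Rightarrow> ('n, 'r) alloc \<Rightarrow> real) \<Rightarrow>
   ('n \<Rightarrow> (real^'r) pmf) \<Rightarrow> 'n \<Rightarrow> ('g set \<Rightarrow> real) \<Rightarrow> real^'r \<Rightarrow> real^'r \<Rightarrow> real" where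
  "ubar_tiebreak bnd p D i v bi \<pi> =
     measure_pmf.expectation (others_dist D i)
       (\<lambda>bmi. unif_avg (Xopt_tiebreak bnd (bmi(i := bi)) i \<pi>)
                 (\<lambda>x. v (alloc_bundle bnd x i) - p i (bmi(i := bi)) x))"

lemma tendsto_ubar_delta:
  fixes bnd :: "'n::finite \<Rightarrow> 'r::finite \<Rightarrow> 'g set"
  assumes "finite (set_pmf (others_dist D i))"
  shows "(ubar_delta bnd p D i v bi \<pi> \<longlongrightarrow> ubar_tiebreak bnd p D i v bi \<pi>) (at_right 0)"
proof (rule tendsto_eventually)
  have "eventually (\<lambda>\<delta>. \<forall>bmi\<in>set_pmf (others_dist D i).
      Xopt bnd (bmi(i := bi + \<delta> *\<^sub>R \<pi>)) = Xopt_tiebreak bnd (bmi(i := bi)) i \<pi>) (at_right 0)"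
    using assms by (intro eventually_ball_finite) (auto intro: eventually_Xopt_perturbed)
  then show "eventually (\<lambda>\<delta>. ubar_delta bnd p D i v bi \<pi> \<delta> = ubar_tiebreak bnd p D i v bi \<pi>) (at_right 0)"
    unfolding ubar_delta_def ubar_tiebreak_def
    by eventually_elim (auto simp: AE_measure_pmf_iff intro!: integral_cong_AE)
qed

lemma ubar_opt_eq_Max:
  fixes bnd :: "'n::finite \<Rightarrow> 'r::finite \<Rightarrow> 'g set"
  assumes "finite (set_pmf (others_dist D i))"
  shows "ubar_opt bnd p D i v bi = Max (ubar_tiebreak bnd p D i v bi ` perm_vectors)"
proof -
  have "Lim (at_right 0) (ubar_delta bnd p D i v bi \<pi>) = ubar_tiebreak bnd p D i v bi \<pi>" for \<pi>
    by (intro tendsto_Lim tendsto_ubar_delta[OF assms]) simp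
  then show ?thesis
    unfolding ubar_opt_def by simp
qed

section \<open>Cells\<close>

definition optimality_region ::
  "('n::finite \<Rightarrow> 'r::finite \<Rightarrow> 'g set) \<Rightarrow> ('n \<Rightarrow> (real^'r) pmf) \<Rightarrow> 'n \<Rightarrow>
   (('n, 'r) profile \<Rightarrow> ('n, 'r) alloc set) \<Rightarrow> (real^'r) set" where
  "optimality_region bnd D i Y =
     {b \<in> nonneg_bids. \<forall>bmi\<in>set_pmf (others_dist D i). Y bmi \<subseteq> Xopt bnd (bmi(i := b))}"

lemma polyhedron_optimality_region:
  fixes bnd :: "'n::finite \<Rightarrow> 'r::finite \<Rightarrow> 'g set"
  assumes "finite (set_pmf (others_dist D i))"
  shows "polyhedron (optimality_region bnd D i Y)"
proof -
  have "optimality_region bnd D i Y = nonneg_bids \<inter>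
      (\<Inter>bmi\<in>set_pmf (others_dist D i). \<Inter>x\<in>Y bmi. {c. x \<in> Xopt bnd (bmi(i := c))})"
    by (auto simp: optimality_region_def)
  also have "polyhedron \<dots>"
    using assms
    by (intro polyhedron_Int polyhedron_nonneg_bids polyhedron_Inter finite_imageI ballI)
      (auto intro: polyhedron_Xopt_fun_upd)
  finally show ?thesis .
qed

lemma optimality_region_min:
  assumes "u \<in> optimality_region bnd D i Y" "w \<in> optimality_region bnd D i Y"
  shows "(\<chi> k. min (u $ k) (w $ k)) \<in> optimality_region bnd D i Y"
proof -
  have "Y bmi \<subseteq> Xopt bnd (bmi(i := \<chi> k. min (u $ k) (w $ k)))" if "bmi \<in> set_pmf (others_dist D i)" for bmi
    using assms that Xopt_fun_upd_min by (fastforce simp: optimality_region_def)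
  moreover have "(\<chi> k. min (u $ k) (w $ k)) \<in> nonneg_bids"
    using assms by (simp add: optimality_region_def nonneg_bids_def)
  ultimately show ?thesis
    by (simp add: optimality_region_def)
qed

lemma cell_property_optimality_region:
  fixes bnd :: "'n::finite \<Rightarrow> 'r::finite \<Rightarrow> 'g set"
  assumes "finite (set_pmf (others_dist D i))"
  shows "cell_property bnd D i (optimality_region bnd D i (\<lambda>bmi. {ch bmi}))"
proof -
  have "convex (optimality_region bnd D i (\<lambda>bmi. {ch bmi}))"
    using polyhedron_imp_convex polyhedron_optimality_region[OF assms] by blast
  then show ?thesis
    unfolding cell_property_def by (auto simp: convex_connected optimality_region_def)
qed

lemma cell_property_imp_subset_optimality_region:
  assumes "cell_property bnd D i C"
  shows "\<exists>ch\<in>PiE (set_pmf (others_dist D i)) (\<lambda>_. UNIV).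
           C \<subseteq> optimality_region bnd D i (\<lambda>bmi. {ch bmi})"
proof -
  have "\<forall>bmi\<in>set_pmf (others_dist D i). \<exists>x. \<forall>b\<in>C. x \<in> Xopt bnd (bmi(i := b))"
    using assms by (simp add: cell_property_def)
  then obtain ch where ch: "\<And>bmi b. bmi \<in> set_pmf (others_dist D i) \<Longrightarrow> b \<in> C \<Longrightarrow> ch bmi \<in> Xopt bnd (bmi(i := b))"
    by metis
  have "C \<subseteq> optimality_region bnd D i (\<lambda>bmi. {restrict ch (set_pmf (others_dist D i)) bmi})"
    using assms ch by (auto simp: cell_property_def optimality_region_def)
  then show ?thesis
    by (intro bexI[of _ "restrict ch (set_pmf (others_dist D i))"]) auto
qed

lemma is_cell_imp_optimality_region:
  fixes bnd :: "'n::finite \<Rightarrow> 'r::finite \<Rightarrow> 'g set"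
  assumes "finite (set_pmf (others_dist D i))" "is_cell bnd D i C"
  shows "\<exists>ch\<in>PiE (set_pmf (others_dist D i)) (\<lambda>_. UNIV).
           C = optimality_region bnd D i (\<lambda>bmi. {ch bmi})"
  using assms cell_property_imp_subset_optimality_region cell_property_optimality_region
  by (metis is_cell_def)

lemma ex_cell_containing:
  fixes bnd :: "'n::finite \<Rightarrow> 'r::finite \<Rightarrow> 'g set"
  assumes fin: "finite (set_pmf (others_dist D i))" and "b0 \<in> nonneg_bids"
  shows "\<exists>ch. is_cell bnd D i (optimality_region bnd D i (\<lambda>bmi. {ch bmi})) \<and>
           b0 \<in> optimality_region bnd D i (\<lambda>bmi. {ch bmi})"
proof -
  define R where "R ch = optimality_region bnd D i (\<lambda>bmi. {ch bmi})" for ch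
  define Fam where "Fam = R ` {ch \<in> PiE (set_pmf (others_dist D i)) (\<lambda>_. UNIV). b0 \<in> R ch}"
  have "finite (PiE (set_pmf (others_dist D i)) (\<lambda>_. UNIV :: ('n, 'r) alloc set))"
    using fin by (intro finite_PiE) auto
  then have "finite Fam"
    unfolding Fam_def by (auto intro: finite_imageI finite_subset[rotated])
  moreover have "Fam \<noteq> {}"
  proof -
    have "cell_property bnd D i {b0}"
      using assms(2) Xopt_nonempty[of bnd] by (auto simp: cell_property_def)
    then show ?thesis
      using cell_property_imp_subset_optimality_region unfolding Fam_def R_def by blast
  qed
  ultimately obtain m where "m \<in> Fam" and m_max: "\<And>T. T \<in> Fam \<Longrightarrow> m \<subseteq> T \<Longrightarrow> T = m"
    using finite_has_maximal[of Fam] by metis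
  then obtain ch where m: "m = R ch" "b0 \<in> R ch"
    by (auto simp: Fam_def)
  have "T = m" if sub: "m \<subseteq> T" and cp: "cell_property bnd D i T" for T
  proof -
    obtain ch' where "ch' \<in> PiE (set_pmf (others_dist D i)) (\<lambda>_. UNIV)" "T \<subseteq> R ch'"
      using cell_property_imp_subset_optimality_region[OF cp] unfolding R_def by blast
    moreover from this have "R ch' \<in> Fam"
      using sub m unfolding Fam_def by blast
    ultimately show ?thesis
      using m_max sub by blast
  qed
  then have "is_cell bnd D i m"
    using m cell_property_optimality_region[OF fin] by (auto simp: is_cell_def R_def)
  then show ?thesis
    using m unfolding R_def by blast
qed

lemma finite_cell_vertices:
  fixes bnd :: "'n::finite \<Rightarrow> 'r::finite \<Rightarrow> 'g set"
  assumes fin: "finite (set_pmf (others_dist D i))"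
  shows "finite {b. cell_vertex bnd D i b}"
proof (rule finite_subset)
  show "{b. cell_vertex bnd D i b} \<subseteq> (\<Union>ch\<in>PiE (set_pmf (others_dist D i)) (\<lambda>_. UNIV).
      {b. b extreme_point_of optimality_region bnd D i (\<lambda>bmi. {ch bmi})})"
    unfolding cell_vertex_def using is_cell_imp_optimality_region[OF fin] by blast
  show "finite \<dots>"
    using fin by (intro finite_UN_I finite_PiE finite_polyhedron_extreme_points
      polyhedron_optimality_region) auto
qed

section \<open>Domination by a cell vertex\<close>

text \<open>Minimising the coordinate sum over the compact part below b yields the least element.\<close>

lemma ex_least_element_min_closed:
  fixes L :: "(real^'r::finite) set"
  assumes "closed L" "b \<in> L" "L \<subseteq> nonneg_bids"
    and min_closed: "\<And>u w. u \<in> L \<Longrightarrow> w \<in> L \<Longrightarrow> (\<chi> k. min (u $ k) (w $ k)) \<in> L"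
  shows "\<exists>bs\<in>L. \<forall>w\<in>L. \<forall>k. bs $ k \<le> w $ k"
proof -
  define K where "K = cbox 0 b \<inter> L"
  have "compact K"
    unfolding K_def using assms(1) by (intro compact_Int_closed compact_cbox)
  moreover have "b \<in> K"
    using assms(2,3) by (auto simp: K_def mem_box_cart nonneg_bids_def)
  moreover have "continuous_on K (\<lambda>x. \<Sum>k\<in>UNIV. x $ k)"
    by (intro continuous_intros)
  ultimately obtain bs where "bs \<in> K" and bs_min: "\<And>x. x \<in> K \<Longrightarrow> (\<Sum>k\<in>UNIV. bs $ k) \<le> (\<Sum>k\<in>UNIV. x $ k)"
    using continuous_attains_inf[of K "\<lambda>x. \<Sum>k\<in>UNIV. x $ k"] by blast
  have "bs $ k \<le> w $ k" if "w \<in> L" for w k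
  proof (rule ccontr)
    define m where "m = (\<chi> k. min (w $ k) (bs $ k))"
    assume "\<not> bs $ k \<le> w $ k"
    then have "(\<Sum>k\<in>UNIV. m $ k) < (\<Sum>k\<in>UNIV. bs $ k)"
      by (intro sum_strict_mono_ex1) (auto simp: m_def intro!: exI[of _ k])
    moreover have "m \<in> K"
    proof -
      have "w \<in> nonneg_bids" "bs \<in> cbox 0 b"
        using that \<open>bs \<in> K\<close> assms(3) by (auto simp: K_def)
      then have "m \<in> cbox 0 b"
        by (auto simp: m_def mem_box_cart nonneg_bids_def min.coboundedI2)
      moreover have "m \<in> L"
        unfolding m_def using that \<open>bs \<in> K\<close> min_closed by (simp add: K_def)
      ultimately show ?thesis
        by (simp add: K_def)
    qed
    ultimately show False
      using bs_min by (meson not_less)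
  qed
  then show ?thesis
    using \<open>bs \<in> K\<close> by (auto simp: K_def)
qed

lemma componentwise_least_notin_open_segment:
  fixes a c bs :: "real^'r::finite"
  assumes "\<forall>k. bs $ k \<le> a $ k" "\<forall>k. bs $ k \<le> c $ k"
  shows "bs \<notin> open_segment a c"
proof
  assume "bs \<in> open_segment a c"
  then obtain u where "a \<noteq> c" "0 < u" "u < 1" and bs: "bs = (1 - u) *\<^sub>R a + u *\<^sub>R c"
    by (auto simp: in_segment)
  have "a $ k = bs $ k \<and> c $ k = bs $ k" for k
  proof -
    have "bs $ k = (1 - u) * a $ k + u * c $ k"
      using bs by simp
    then have "(1 - u) * (a $ k - bs $ k) + u * (c $ k - bs $ k) = 0"
      by (simp add: algebra_simps)
    moreover have "0 \<le> a $ k - bs $ k" "0 \<le> c $ k - bs $ k"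
      using assms by auto
    then have "0 \<le> (1 - u) * (a $ k - bs $ k)" "0 \<le> u * (c $ k - bs $ k)"
      using \<open>0 < u\<close> \<open>u < 1\<close> by simp_all
    ultimately have "(1 - u) * (a $ k - bs $ k) = 0" "u * (c $ k - bs $ k) = 0"
      by linarith+
    then show ?thesis
      using \<open>0 < u\<close> \<open>u < 1\<close> by simp
  qed
  then show False
    using \<open>a \<noteq> c\<close> by (simp add: vec_eq_iff)
qed

lemma least_element_optimality_region_is_cell_vertex:
  fixes bnd :: "'n::finite \<Rightarrow> 'r::finite \<Rightarrow> 'g set"
  assumes fin: "finite (set_pmf (others_dist D i))"
    and bs: "bs \<in> optimality_region bnd D i Y"
    and least: "\<forall>w\<in>optimality_region bnd D i Y. \<forall>k. bs $ k \<le> w $ k"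
  shows "cell_vertex bnd D i bs"
proof -
  have "bs \<in> nonneg_bids"
    using bs by (simp add: optimality_region_def)
  then obtain ch where cell: "is_cell bnd D i (optimality_region bnd D i (\<lambda>bmi. {ch bmi}))"
    and bs_cell: "bs \<in> optimality_region bnd D i (\<lambda>bmi. {ch bmi})"
    using ex_cell_containing[OF fin] by blast
  let ?C = "optimality_region bnd D i (\<lambda>bmi. {ch bmi})"
  have in_region: "a \<in> optimality_region bnd D i Y"
    if "a \<in> ?C" "c \<in> ?C" "bs \<in> open_segment a c" for a c
  proof -
    have "y \<in> Xopt bnd (bmi(i := a))"
      if "bmi \<in> set_pmf (others_dist D i)" "y \<in> Y bmi" for bmi y
    proof (rule Xopt_fun_upd_open_segment)
      show "ch bmi \<in> Xopt bnd (bmi(i := a))" "ch bmi \<in> Xopt bnd (bmi(i := c))"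
        "ch bmi \<in> Xopt bnd (bmi(i := bs))"
        using \<open>a \<in> ?C\<close> \<open>c \<in> ?C\<close> bs_cell that(1) by (simp_all add: optimality_region_def)
      show "y \<in> Xopt bnd (bmi(i := bs))"
        using bs that by (auto simp: optimality_region_def)
    qed fact
    then show ?thesis
      using \<open>a \<in> ?C\<close> by (auto simp: optimality_region_def)
  qed
  have "bs extreme_point_of ?C"
    unfolding extreme_point_of_def
  proof (intro conjI ballI notI)
    fix a c assume "a \<in> ?C" "c \<in> ?C" "bs \<in> open_segment a c"
    then have "a \<in> optimality_region bnd D i Y" "c \<in> optimality_region bnd D i Y"
      using in_region open_segment_commute by blast+
    then show False
      using least componentwise_least_notin_open_segment \<open>bs \<in> open_segment a c\<close> by blast
  qed (fact bs_cell)
  then show ?thesis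
    using cell cell_vertex_def by blast
qed

lemma ubar_tiebreak_lower_bid:
  fixes bnd :: "'n::finite \<Rightarrow> 'r::finite \<Rightarrow> 'g set"
  assumes nd: "nondecreasing_payment bnd p"
    and nnD: "\<And>j. set_pmf (D j) \<subseteq> nonneg_bids"
    and fin: "finite (set_pmf (others_dist D i))"
    and bi: "bi \<in> nonneg_bids" and le: "\<forall>k. bs $ k \<le> bi $ k"
    and bs: "bs \<in> optimality_region bnd D i (\<lambda>bmi. Xopt_tiebreak bnd (bmi(i := bi)) i \<pi>0)"
    and "\<pi>0 \<in> perm_vectors"
    and lex: "refines_lex (bi - bs) \<pi>0 \<pi>1"
  shows "ubar_tiebreak bnd p D i v bi \<pi>0 \<le> ubar_tiebreak bnd p D i v bs \<pi>1"
  unfolding ubar_tiebreak_def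
proof (rule expectation_mono_finite_pmf[OF fin])
  fix bmi assume bmi: "bmi \<in> set_pmf (others_dist D i)"
  have keep: "Xopt_tiebreak bnd (bmi(i := bi)) i \<pi>0 \<subseteq> Xopt bnd (bmi(i := bs))"
    using bs bmi by (simp add: optimality_region_def)
  have "\<forall>j. (bmi(i := c)) j \<in> nonneg_bids" if "c \<in> nonneg_bids" for c
    using that set_pmf_others_dist[OF bmi] nnD by auto
  then have nonneg: "\<forall>j. (bmi(i := bs)) j \<in> nonneg_bids" "\<forall>j. (bmi(i := bi)) j \<in> nonneg_bids"
    using bi bs by (auto simp: optimality_region_def)
  have "p i (bmi(i := bs)) x \<le> p i (bmi(i := bi)) x"
    if "x \<in> Xopt_tiebreak bnd (bmi(i := bi)) i \<pi>0" for x
  proof -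
    have "x \<in> Xopt bnd (bmi(i := bs))" "x \<in> Xopt bnd (bmi(i := bi))"
      using that keep Xopt_tiebreak_subset by blast+
    then show ?thesis
      using nd[unfolded nondecreasing_payment_def, rule_format, of "bmi(i := bs)" "bmi(i := bi)" x i]
        nonneg le by simp
  qed
  moreover have "Xopt_tiebreak bnd (bmi(i := bs)) i \<pi>1 = Xopt_tiebreak bnd (bmi(i := bi)) i \<pi>0"
    by (rule Xopt_tiebreak_lower_bid[OF keep \<open>\<pi>0 \<in> perm_vectors\<close> lex])
  ultimately show "unif_avg (Xopt_tiebreak bnd (bmi(i := bi)) i \<pi>0) (\<lambda>x. v (alloc_bundle bnd x i) - p i (bmi(i := bi)) x)
      \<le> unif_avg (Xopt_tiebreak bnd (bmi(i := bs)) i \<pi>1) (\<lambda>x. v (alloc_bundle bnd x i) - p i (bmi(i := bs)) x)"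
    unfolding unif_avg_def by (auto intro!: divide_right_mono sum_mono diff_left_mono)
qed

lemma ex_cell_vertex_ubar_opt_ge:
  fixes bnd :: "'n::finite \<Rightarrow> 'r::finite \<Rightarrow> 'g set"
  assumes nd: "nondecreasing_payment bnd p"
    and finD: "\<And>j. finite (set_pmf (D j))" and nnD: "\<And>j. set_pmf (D j) \<subseteq> nonneg_bids"
    and bi: "bi \<in> nonneg_bids"
  shows "\<exists>bs. cell_vertex bnd D i bs \<and> ubar_opt bnd p D i v bi \<le> ubar_opt bnd p D i v bs"
proof -
  have fin: "finite (set_pmf (others_dist D i))"
    using finD by (rule finite_set_pmf_others_dist)
  note ubar_opt = ubar_opt_eq_Max[OF fin]
  have "ubar_opt bnd p D i v bi \<in> ubar_tiebreak bnd p D i v bi ` perm_vectors"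
    unfolding ubar_opt using perm_vectors_finite perm_vectors_nonempty by (intro Max_in) auto
  then obtain \<pi>0 where "\<pi>0 \<in> perm_vectors" and opt_bi: "ubar_opt bnd p D i v bi = ubar_tiebreak bnd p D i v bi \<pi>0"
    by blast
  define L where "L = optimality_region bnd D i (\<lambda>bmi. Xopt_tiebreak bnd (bmi(i := bi)) i \<pi>0)"
  have "bi \<in> L"
    using bi by (auto simp: L_def optimality_region_def intro: Xopt_tiebreak_subset[THEN subsetD])
  moreover have "closed L"
    unfolding L_def by (intro polyhedron_imp_closed polyhedron_optimality_region[OF fin])
  moreover have "L \<subseteq> nonneg_bids"
    by (auto simp: L_def optimality_region_def)
  moreover have "\<And>u w. u \<in> L \<Longrightarrow> w \<in> L \<Longrightarrow> (\<chi> k. min (u $ k) (w $ k)) \<in> L"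
    unfolding L_def by (rule optimality_region_min)
  ultimately obtain bs where "bs \<in> L" and least: "\<forall>w\<in>L. \<forall>k. bs $ k \<le> w $ k"
    by (metis ex_least_element_min_closed)
  then have vertex: "cell_vertex bnd D i bs"
    unfolding L_def by (rule least_element_optimality_region_is_cell_vertex[OF fin])
  have le: "\<forall>k. bs $ k \<le> bi $ k"
    using least \<open>bi \<in> L\<close> by blast
  then obtain \<pi>1 where "\<pi>1 \<in> perm_vectors" and lex: "refines_lex (bi - bs) \<pi>0 \<pi>1"
    using ex_perm_vector_refines_lex[OF \<open>\<pi>0 \<in> perm_vectors\<close>, of "bi - bs"] by auto
  have "ubar_opt bnd p D i v bi \<le> ubar_tiebreak bnd p D i v bs \<pi>1"
    unfolding opt_bi using \<open>bs \<in> L\<close> unfolding L_def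
    by (rule ubar_tiebreak_lower_bid[OF nd nnD fin bi le _ \<open>\<pi>0 \<in> perm_vectors\<close> lex])
  also have "\<dots> \<le> ubar_opt bnd p D i v bs"
    unfolding ubar_opt using perm_vectors_finite \<open>\<pi>1 \<in> perm_vectors\<close> by (intro Max_ge) auto
  finally show ?thesis
    using vertex by blast
qed

theorem lemma4:
  fixes bnd :: "'n::finite \<Rightarrow> 'r::finite \<Rightarrow> 'g::finite set"
    and p :: "'n \<Rightarrow> ('n \<Rightarrow> real^'r) \<Rightarrow> ('n \<Rightarrow> 'r option) \<Rightarrow> real"
    and D :: "'n \<Rightarrow> (real^'r) pmf"
    and i :: 'n
    and v :: "'g set \<Rightarrow> real"
  assumes "valid_payment bnd p"
    and "nondecreasing_payment bnd p"
    and "\<And>j. finite (set_pmf (D j))"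
    and "\<And>j. set_pmf (D j) \<subseteq> nonneg_bids"
    and "valuation v"
  shows "\<exists>bstar. cell_vertex bnd D i bstar \<and>
           (\<forall>bi \<in> nonneg_bids. ubar_opt bnd p D i v bstar \<ge> ubar_opt bnd p D i v bi)"
proof -
  let ?V = "{b. cell_vertex bnd D i b}"
  have dominated: "\<exists>bs. cell_vertex bnd D i bs \<and> ubar_opt bnd p D i v b \<le> ubar_opt bnd p D i v bs"
    if "b \<in> nonneg_bids" for b
    using ex_cell_vertex_ubar_opt_ge[OF assms(2-4) that] .
  have "finite ?V"
    using finite_cell_vertices finite_set_pmf_others_dist assms(3) by blast
  moreover have "?V \<noteq> {}"
    using dominated[of 0] by (auto simp: nonneg_bids_def)
  ultimately obtain bstar where "bstar \<in> maximizers ?V (ubar_opt bnd p D i v)"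
    using maximizers_nonempty by blast
  then show ?thesis
    using dominated by (fastforce simp: maximizers_def)
qed

end
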